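(* For every co-comparability graph $G$, $\operatorname{tw}(G)\le 2\Delta(G)-1$, where $\Delta(G)$ is the maximum degree of $G$.
   Context: A comparability graph is a graph whose vertex set admits a partial order such that two distinct vertices are adjacent iff they are comparable. $G$ is a co-comparability graph if its complement is a comparability graph. The treewidth $\operatorname{tw}(G)$ is the minimum, over all tree decompositions $(\{X_i\},T)$ of $G$ (a tree $T$ with vertex subsets $X_i$ at its nodes covering all vertices and all edges, such that for each vertex the nodes containing it form a connected subtree), of $\max_i|X_i|-1$. *)

theory Defs
  imports Main
begin

definition simple_graph :: "'a set \<Rightarrow> ('a \<Rightarrow> 'a \<Rightarrow> bool) \<Rightarrow> bool" where
  "simple_graph V E \<longleftrightarrow> finite V \<and> (\<forall>u v. E u v \<longrightarrow> u \<in> V \<and> v \<in> V)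
     \<and> (\<forall>u v. E u v \<longrightarrow> E v u) \<and> (\<forall>v. \<not> E v v)"

definition comparability_graph :: "'a set \<Rightarrow> ('a \<Rightarrow> 'a \<Rightarrow> bool) \<Rightarrow> bool" where
  "comparability_graph V E \<longleftrightarrow> (\<exists>r. partial_order_on V r \<and>
     (\<forall>u\<in>V. \<forall>v\<in>V. u \<noteq> v \<longrightarrow> (E u v \<longleftrightarrow> (u, v) \<in> r \<or> (v, u) \<in> r)))"

definition complement_graph :: "'a set \<Rightarrow> ('a \<Rightarrow> 'a \<Rightarrow> bool) \<Rightarrow> ('a \<Rightarrow> 'a \<Rightarrow> bool)" where
  "complement_graph V E = (\<lambda>u v. u \<in> V \<and> v \<in> V \<and> u \<noteq> v \<and> \<not> E u v)"

definition cocomparability_graph :: "'a set \<Rightarrow> ('a \<Rightarrow> 'a \<Rightarrow> bool) \<Rightarrow> bool" where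
  "cocomparability_graph V E \<longleftrightarrow> comparability_graph V (complement_graph V E)"

definition max_degree :: "'a set \<Rightarrow> ('a \<Rightarrow> 'a \<Rightarrow> bool) \<Rightarrow> nat" where
  "max_degree V E = Max (insert 0 ((\<lambda>v. card {u \<in> V. E v u}) ` V))"

definition connected_in :: "'b set \<Rightarrow> ('b \<Rightarrow> 'b \<Rightarrow> bool) \<Rightarrow> bool" where
  "connected_in S F \<longleftrightarrow> (\<forall>i\<in>S. \<forall>j\<in>S. (\<lambda>a b. F a b \<and> a \<in> S \<and> b \<in> S)\<^sup>*\<^sup>* i j)"

definition is_tree :: "nat set \<Rightarrow> (nat \<Rightarrow> nat \<Rightarrow> bool) \<Rightarrow> bool" where
  "is_tree I F \<longleftrightarrow> I \<noteq> {} \<and> simple_graph I F \<and> connected_in I F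
     \<and> card {(i, j). i \<in> I \<and> j \<in> I \<and> F i j \<and> i < j} = card I - 1"

definition tree_decomposition ::
  "'a set \<Rightarrow> ('a \<Rightarrow> 'a \<Rightarrow> bool) \<Rightarrow> nat set \<Rightarrow> (nat \<Rightarrow> nat \<Rightarrow> bool) \<Rightarrow> (nat \<Rightarrow> 'a set) \<Rightarrow> bool" where
  "tree_decomposition V E I F X \<longleftrightarrow> is_tree I F
     \<and> (\<forall>i\<in>I. X i \<subseteq> V)
     \<and> (\<forall>v\<in>V. \<exists>i\<in>I. v \<in> X i)
     \<and> (\<forall>u v. E u v \<longrightarrow> (\<exists>i\<in>I. u \<in> X i \<and> v \<in> X i))
     \<and> (\<forall>v\<in>V. connected_in {i \<in> I. v \<in> X i} F)"

definition decomposition_width :: "nat set \<Rightarrow> (nat \<Rightarrow> 'a set) \<Rightarrow> nat" where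
  "decomposition_width I X = Max ((\<lambda>i. card (X i)) ` I) - 1"

definition treewidth :: "'a set \<Rightarrow> ('a \<Rightarrow> 'a \<Rightarrow> bool) \<Rightarrow> nat" where
  "treewidth V E = (LEAST w. \<exists>I F X. tree_decomposition V E I F X \<and> decomposition_width I X = w)"

end

theory Submission
  imports Defs
begin

text \<open>Take a linear extension \<open>x\<^sub>0, x\<^sub>1, \<dots>\<close> of a partial order whose
  comparability graph is the complement of \<open>G\<close>. It is umbrella-free: if \<open>i < j < k\<close> and
  \<open>x\<^sub>i x\<^sub>k\<close> is an edge, then \<open>x\<^sub>j\<close> is adjacent to \<open>x\<^sub>i\<close> or to \<open>x\<^sub>k\<close>, since otherwise
  \<open>x\<^sub>i < x\<^sub>j < x\<^sub>k\<close> would make \<open>x\<^sub>i, x\<^sub>k\<close> comparable. For any vertex ordering, the bags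
  \<open>B\<^sub>i = {x\<^sub>i} \<union> {x\<^sub>j | j < i, x\<^sub>j has a neighbour x\<^sub>k with k \<ge> i}\<close> form a path
  decomposition. If \<open>j\<close> is the least index of a vertex of \<open>B\<^sub>i - {x\<^sub>i}\<close> and \<open>x\<^sub>k\<close> is such a
  neighbour, the umbrella property puts all of \<open>B\<^sub>i\<close> into \<open>N(x\<^sub>j) \<union> N(x\<^sub>k)\<close>,
  so \<open>|B\<^sub>i| \<le> 2\<Delta>\<close>.\<close>

lemma finite_partial_order_has_minimal:
  assumes "finite S" "S \<noteq> {}" "trans r" "antisym r"
  obtains m where "m \<in> S" "\<And>y. y \<in> S \<Longrightarrow> (y, m) \<in> r \<Longrightarrow> y = m"
proof -
  let ?less = "\<lambda>x y. (x, y) \<in> r \<and> x \<noteq> y"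
  have "asymp_on S ?less" using assms(4) by (auto intro: asymp_onI dest: antisymD)
  moreover have "transp_on S ?less" using assms(3,4) by (auto intro!: transp_onI dest: transD antisymD)
  ultimately show thesis
    using Finite_Set.bex_min_element[OF assms(1) _ _ assms(2)] that by blast
qed

lemma finite_partial_order_linear_extension:
  assumes "finite S" "trans r" "antisym r"
  obtains xs where "set xs = S" "distinct xs" "sorted_wrt (\<lambda>x y. (y, x) \<notin> r) xs"
proof -
  have "\<exists>xs. set xs = S \<and> distinct xs \<and> sorted_wrt (\<lambda>x y. (y, x) \<notin> r) xs"
    using assms(1)
  proof (induction S rule: finite_psubset_induct)
    case (psubset S)
    show ?case
    proof (cases "S = {}")
      case True
      then show ?thesis by simp
    next
      case False
      then obtain m where m: "m \<in> S" "\<And>y. y \<in> S \<Longrightarrow> (y, m) \<in> r \<Longrightarrow> y = m"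
        using finite_partial_order_has_minimal psubset.hyps assms(2,3) by metis
      then obtain xs where "set xs = S - {m}" "distinct xs" "sorted_wrt (\<lambda>x y. (y, x) \<notin> r) xs"
        using psubset.IH[of "S - {m}"] by blast
      with m show ?thesis by (intro exI[of _ "m # xs"]) auto
    qed
  qed
  with that show thesis by blast
qed

definition umbrella_free :: "('a \<Rightarrow> 'a \<Rightarrow> bool) \<Rightarrow> 'a list \<Rightarrow> bool" where
  "umbrella_free E xs \<longleftrightarrow> (\<forall>i j k. i < j \<longrightarrow> j < k \<longrightarrow> k < length xs \<longrightarrow>
     E (xs!i) (xs!k) \<longrightarrow> E (xs!i) (xs!j) \<or> E (xs!j) (xs!k))"

lemma umbrella_free_if_sorted_complement_order:
  assumes xs: "set xs = V" "distinct xs" "sorted_wrt (\<lambda>x y. (y, x) \<notin> r) xs"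
    and "trans r"
    and non_adjacent_iff: "\<And>u v. u \<in> V \<Longrightarrow> v \<in> V \<Longrightarrow> u \<noteq> v \<Longrightarrow> \<not> E u v \<longleftrightarrow> (u, v) \<in> r \<or> (v, u) \<in> r"
  shows "umbrella_free E xs"
  unfolding umbrella_free_def
proof (intro allI impI)
  fix i j k assume ijk: "i < j" "j < k" "k < length xs" and "E (xs!i) (xs!k)"
  have in_V: "xs!i \<in> V" "xs!j \<in> V" "xs!k \<in> V" using xs(1) ijk by auto
  have distinct: "xs!i \<noteq> xs!j" "xs!j \<noteq> xs!k" "xs!i \<noteq> xs!k"
    using xs(2) ijk by (auto simp: nth_eq_iff_index_eq)
  have not_below: "(xs!b, xs!a) \<notin> r" if "a < b" "b < length xs" for a b
    using xs(3) that by (simp add: sorted_wrt_iff_nth_less)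
  show "E (xs!i) (xs!j) \<or> E (xs!j) (xs!k)"
  proof (rule ccontr)
    assume "\<not> (E (xs!i) (xs!j) \<or> E (xs!j) (xs!k))"
    moreover have "(xs!j, xs!i) \<notin> r" "(xs!k, xs!j) \<notin> r"
      using not_below ijk by auto
    ultimately have "(xs!i, xs!j) \<in> r" "(xs!j, xs!k) \<in> r"
      using non_adjacent_iff in_V distinct by blast+
    then have "(xs!i, xs!k) \<in> r" using \<open>trans r\<close> by (meson transD)
    then show False using non_adjacent_iff in_V distinct \<open>E (xs!i) (xs!k)\<close> by blast
  qed
qed

lemma cocomparability_graph_umbrella_free_ordering:
  assumes "finite V" "cocomparability_graph V E"
  obtains xs where "set xs = V" "distinct xs" "umbrella_free E xs"
proof -
  obtain r where r: "partial_order_on V r"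
    "\<forall>u\<in>V. \<forall>v\<in>V. u \<noteq> v \<longrightarrow> (complement_graph V E u v \<longleftrightarrow> (u, v) \<in> r \<or> (v, u) \<in> r)"
    using assms(2) unfolding cocomparability_graph_def comparability_graph_def by blast
  have "trans r" "antisym r" using r(1) partial_order_onD by auto
  then obtain xs where xs: "set xs = V" "distinct xs" "sorted_wrt (\<lambda>x y. (y, x) \<notin> r) xs"
    using finite_partial_order_linear_extension assms(1) by blast
  have "umbrella_free E xs"
    by (rule umbrella_free_if_sorted_complement_order[OF xs \<open>trans r\<close>])
      (use r(2) in \<open>auto simp: complement_graph_def\<close>)
  with xs that show thesis by blast
qed

definition path_graph :: "nat \<Rightarrow> nat \<Rightarrow> nat \<Rightarrow> bool" where
  "path_graph n i j \<longleftrightarrow> i < n \<and> j < n \<and> (j = Suc i \<or> i = Suc j)"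

lemma connected_in_path_graph_interval:
  assumes convex: "\<And>a b c. a \<in> S \<Longrightarrow> b \<in> S \<Longrightarrow> a \<le> c \<Longrightarrow> c \<le> b \<Longrightarrow> c \<in> S"
    and "S \<subseteq> {..<n}"
  shows "connected_in S (path_graph n)"
proof -
  let ?R = "\<lambda>a b. path_graph n a b \<and> a \<in> S \<and> b \<in> S"
  have upward: "?R\<^sup>*\<^sup>* a b" if "a \<in> S" "b \<in> S" "a \<le> b" for a b
    using \<open>a \<le> b\<close> \<open>b \<in> S\<close>
  proof (induction b rule: dec_induct)
    case base
    show ?case by simp
  next
    case (step c)
    have "c \<in> S" "Suc c \<in> S" using convex[OF \<open>a \<in> S\<close> step.prems] step.hyps by auto
    with \<open>S \<subseteq> {..<n}\<close> have "?R c (Suc c)" by (auto simp: path_graph_def)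
    with step.IH[OF \<open>c \<in> S\<close>] show ?case by (rule rtranclp.rtrancl_into_rtrancl)
  qed
  have "symp ?R" by (auto intro: sympI simp: path_graph_def)
  then have "symp ?R\<^sup>*\<^sup>*" by (rule symp_rtranclp)
  show ?thesis
    unfolding connected_in_def
  proof (intro ballI)
    fix a b assume "a \<in> S" "b \<in> S"
    show "?R\<^sup>*\<^sup>* a b"
    proof (cases "a \<le> b")
      case True
      then show ?thesis using upward \<open>a \<in> S\<close> \<open>b \<in> S\<close> by blast
    next
      case False
      then have "?R\<^sup>*\<^sup>* b a" using upward \<open>a \<in> S\<close> \<open>b \<in> S\<close> by simp
      with \<open>symp ?R\<^sup>*\<^sup>*\<close> show ?thesis by (rule sympD)
    qed
  qed
qed

lemma is_tree_path_graph:
  assumes "n > 0"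
  shows "is_tree {..<n} (path_graph n)"
proof -
  have "{(i, j). i \<in> {..<n} \<and> j \<in> {..<n} \<and> path_graph n i j \<and> i < j} = (\<lambda>i. (i, Suc i)) ` {..<n - 1}"
    unfolding path_graph_def by auto
  moreover have "card ((\<lambda>i. (i, Suc i)) ` {..<n - 1}) = n - 1"
    by (subst card_image) (auto simp: inj_on_def)
  moreover have "simple_graph {..<n} (path_graph n)"
    unfolding simple_graph_def path_graph_def by auto
  moreover have "connected_in {..<n} (path_graph n)"
    by (rule connected_in_path_graph_interval) auto
  ultimately show ?thesis unfolding is_tree_def using assms by auto
qed

definition ordering_bag :: "('a \<Rightarrow> 'a \<Rightarrow> bool) \<Rightarrow> 'a list \<Rightarrow> nat \<Rightarrow> 'a set" where
  "ordering_bag E xs i =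
     insert (xs!i) {xs!j | j. j < i \<and> (\<exists>k. i \<le> k \<and> k < length xs \<and> E (xs!j) (xs!k))}"

lemma nth_mem_ordering_bag_iff:
  assumes "distinct xs" "i < length xs" "j < length xs"
  shows "xs!j \<in> ordering_bag E xs i \<longleftrightarrow>
    j = i \<or> j < i \<and> (\<exists>k. i \<le> k \<and> k < length xs \<and> E (xs!j) (xs!k))"
  using assms by (auto simp: ordering_bag_def nth_eq_iff_index_eq)

lemma nth_mem_ordering_bag_between:
  assumes "distinct xs" "j < length xs" "b < length xs" "a \<le> c" "c \<le> b"
    and "xs!j \<in> ordering_bag E xs a" "xs!j \<in> ordering_bag E xs b"
  shows "xs!j \<in> ordering_bag E xs c"
proof -
  have "a < length xs" "c < length xs" using assms(3-5) by simp_all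
  note mem_iff = nth_mem_ordering_bag_iff[OF assms(1) _ assms(2)]
  have "j = a \<or> j < a" using assms(6) mem_iff[OF \<open>a < length xs\<close>] by blast
  then have "j \<le> a" by auto
  with \<open>a \<le> c\<close> have "j \<le> c" by simp
  have "j = b \<or> (\<exists>k. b \<le> k \<and> k < length xs \<and> E (xs!j) (xs!k))"
    using assms(7) mem_iff[OF assms(3)] by auto
  with \<open>j \<le> c\<close> \<open>c \<le> b\<close> have "j = c \<or> (\<exists>k. c \<le> k \<and> k < length xs \<and> E (xs!j) (xs!k))"
    by auto
  with \<open>j \<le> c\<close> have "j = c \<or> j < c \<and> (\<exists>k. c \<le> k \<and> k < length xs \<and> E (xs!j) (xs!k))"
    by auto
  then show ?thesis using mem_iff[OF \<open>c < length xs\<close>] by simp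
qed

lemma ordering_path_decomposition:
  assumes "simple_graph V E" "set xs = V" "distinct xs" "xs \<noteq> []"
  shows "tree_decomposition V E {..<length xs} (path_graph (length xs)) (ordering_bag E xs)"
proof -
  let ?n = "length xs"
  have E_sym: "\<And>u v. E u v \<Longrightarrow> E v u" and E_in_V: "\<And>u v. E u v \<Longrightarrow> u \<in> V \<and> v \<in> V"
    using assms(1) unfolding simple_graph_def by auto
  have mem_iff: "xs!j \<in> ordering_bag E xs i \<longleftrightarrow>
      j = i \<or> j < i \<and> (\<exists>k. i \<le> k \<and> k < ?n \<and> E (xs!j) (xs!k))"
    if "i < ?n" "j < ?n" for i j
    using nth_mem_ordering_bag_iff[OF assms(3) that] .
  have index: "\<exists>j < ?n. v = xs!j" if "v \<in> V" for v
    using that assms(2) by (metis in_set_conv_nth)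
  have edges_covered: "\<exists>i < ?n. u \<in> ordering_bag E xs i \<and> v \<in> ordering_bag E xs i" if "E u v" for u v
  proof -
    obtain a b where ab: "a < ?n" "b < ?n" "u = xs!a" "v = xs!b"
      using index E_in_V[OF \<open>E u v\<close>] by blast
    show ?thesis
    proof (cases "a \<le> b")
      case True
      then show ?thesis using mem_iff[of b a] mem_iff[of b b] ab \<open>E u v\<close> by (auto simp: le_less)
    next
      case False
      then show ?thesis using mem_iff[of a a] mem_iff[of a b] ab E_sym[OF \<open>E u v\<close>] by auto
    qed
  qed
  show ?thesis
    unfolding tree_decomposition_def
  proof (intro conjI ballI allI impI)
    show "is_tree {..<?n} (path_graph ?n)"
      using is_tree_path_graph assms(4) by simp
    show "ordering_bag E xs i \<subseteq> V" if "i \<in> {..<?n}" for i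
      using that assms(2) by (auto simp: ordering_bag_def)
    show "\<exists>i\<in>{..<?n}. v \<in> ordering_bag E xs i" if "v \<in> V" for v
      using index[OF that] mem_iff by auto
    show "\<exists>i\<in>{..<?n}. u \<in> ordering_bag E xs i \<and> v \<in> ordering_bag E xs i" if "E u v" for u v
      using edges_covered[OF that] by auto
    show "connected_in {i \<in> {..<?n}. v \<in> ordering_bag E xs i} (path_graph ?n)" if "v \<in> V" for v
      using index[OF that] nth_mem_ordering_bag_between[OF assms(3)]
      by (intro connected_in_path_graph_interval) auto
  qed
qed

lemma ordering_bag_subset_neighbourhoods:
  assumes uf: "umbrella_free E xs" and "symp E"
    and "j < i" "i \<le> k" "k < length xs" and jk: "E (xs!j) (xs!k)"
    and least: "\<And>j' k'. j' < j \<Longrightarrow> i \<le> k' \<Longrightarrow> k' < length xs \<Longrightarrow> \<not> E (xs!j') (xs!k')"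
  shows "ordering_bag E xs i \<subseteq> {u. E (xs!j) u} \<union> {u. E (xs!k) u}"
proof -
  have covered: "E (xs!j) (xs!l) \<or> E (xs!k) (xs!l)" if "j \<le> l" "l \<le> i" for l
  proof (cases "l = j \<or> l = k")
    case True
    then show ?thesis using jk \<open>symp E\<close> by (auto dest: sympD)
  next
    case False
    then have "j < l" "l < k" using that \<open>i \<le> k\<close> by auto
    then show ?thesis using uf \<open>k < length xs\<close> jk \<open>symp E\<close>
      unfolding umbrella_free_def by (auto dest: sympD)
  qed
  show ?thesis
  proof
    fix u assume "u \<in> ordering_bag E xs i"
    then obtain l where "u = xs!l"
      and l: "l = i \<or> l < i \<and> (\<exists>k'. i \<le> k' \<and> k' < length xs \<and> E (xs!l) (xs!k'))"
      unfolding ordering_bag_def by blast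
    moreover from l have "l \<le> i" by auto
    moreover from l have "j \<le> l" using least \<open>j < i\<close> by (meson less_imp_le not_le)
    ultimately show "u \<in> {u. E (xs!j) u} \<union> {u. E (xs!k) u}" using covered by auto
  qed
qed

lemma card_neighbours_le_max_degree:
  assumes "simple_graph V E" "v \<in> V"
  shows "card {u. E v u} \<le> max_degree V E"
proof -
  have "{u. E v u} = {u \<in> V. E v u}" "finite V"
    using assms(1) unfolding simple_graph_def by auto
  then show ?thesis unfolding max_degree_def using assms(2) by (auto intro: Max_ge)
qed

lemma card_ordering_bag_le:
  assumes "simple_graph V E" "set xs = V" "umbrella_free E xs" "i < length xs"
  shows "card (ordering_bag E xs i) \<le> max 1 (2 * max_degree V E)"
proof -
  have "symp E" "finite V" using assms(1) unfolding simple_graph_def by (auto intro: sympI)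
  let ?late_neighbour = "\<lambda>j. j < i \<and> (\<exists>k. i \<le> k \<and> k < length xs \<and> E (xs!j) (xs!k))"
  show ?thesis
  proof (cases "\<exists>j. ?late_neighbour j")
    case False
    then have "ordering_bag E xs i = {xs!i}" unfolding ordering_bag_def by auto
    then show ?thesis by simp
  next
    case True
    then obtain j where j: "?late_neighbour j" and least: "\<And>j'. j' < j \<Longrightarrow> \<not> ?late_neighbour j'"
      unfolding exists_least_iff[of ?late_neighbour] by blast
    then obtain k where k: "i \<le> k" "k < length xs" "E (xs!j) (xs!k)" by blast
    have in_V: "xs!j \<in> V" "xs!k \<in> V" using j k assms(2,4) by auto
    have "ordering_bag E xs i \<subseteq> {u. E (xs!j) u} \<union> {u. E (xs!k) u}"
      using ordering_bag_subset_neighbourhoods[OF assms(3) \<open>symp E\<close> _ k] j least by auto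
    then have "card (ordering_bag E xs i) \<le> card ({u. E (xs!j) u} \<union> {u. E (xs!k) u})"
      using \<open>finite V\<close> assms(1) unfolding simple_graph_def
      by (intro card_mono) (auto intro: finite_subset)
    also have "\<dots> \<le> card {u. E (xs!j) u} + card {u. E (xs!k) u}" by (rule card_Un_le)
    also have "\<dots> \<le> 2 * max_degree V E"
      using card_neighbours_le_max_degree[OF assms(1) in_V(1)]
        card_neighbours_le_max_degree[OF assms(1) in_V(2)] by simp
    finally show ?thesis by simp
  qed
qed

lemma treewidth_le_decomposition_width:
  assumes "tree_decomposition V E I F X"
  shows "treewidth V E \<le> decomposition_width I X"
  unfolding treewidth_def by (rule Least_le) (use assms in blast)

lemma treewidth_empty:
  assumes "simple_graph {} E"
  shows "treewidth {} E = 0"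
proof -
  have "tree_decomposition {} E {0} (\<lambda>_ _. False) (\<lambda>_. {})"
    using assms unfolding tree_decomposition_def is_tree_def simple_graph_def connected_in_def
    by auto
  then have "treewidth {} E \<le> decomposition_width {0::nat} (\<lambda>_. {} :: 'a set)"
    by (rule treewidth_le_decomposition_width)
  then show ?thesis by (simp add: decomposition_width_def)
qed

lemma treewidth_le_if_umbrella_free:
  assumes "simple_graph V E" "set xs = V" "distinct xs" "umbrella_free E xs"
  shows "treewidth V E \<le> 2 * max_degree V E - 1"
proof (cases "xs = []")
  case True
  with assms(1,2) show ?thesis by (simp add: treewidth_empty)
next
  case False
  let ?n = "length xs"
  have "treewidth V E \<le> decomposition_width {..<?n} (ordering_bag E xs)"
    using ordering_path_decomposition[OF assms(1-3) False] by (rule treewidth_le_decomposition_width)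
  also have "\<dots> \<le> max 1 (2 * max_degree V E) - 1"
    unfolding decomposition_width_def using False card_ordering_bag_le[OF assms(1,2,4)]
    by (intro diff_le_mono) (subst Max_le_iff; auto)
  finally show ?thesis by simp
qed

theorem lemma13:
  fixes V :: "'a set" and E :: "'a \<Rightarrow> 'a \<Rightarrow> bool"
  assumes "simple_graph V E"
    and "cocomparability_graph V E"
  shows "treewidth V E \<le> 2 * max_degree V E - 1"
proof -
  have "finite V" using assms(1) unfolding simple_graph_def by simp
  then obtain xs where "set xs = V" "distinct xs" "umbrella_free E xs"
    using cocomparability_graph_umbrella_free_ordering assms(2) by blast
  with assms(1) show ?thesis by (rule treewidth_le_if_umbrella_free)
qed

end
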